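(* Let $n\ge2$, $P_{n-1}(\lambda)=\mu_1\cdots\mu_n$ with $\mu_i=\sum_{j\neq i}\lambda_j$, $\mathcal P_{n-1}=\{\lambda\in\mathbb R^n:\mu_i>0\ \forall i\}$, and $f(\lambda)=\log P_{n-1}(\lambda)$ on $\mathcal P_{n-1}$. Let $\lambda,\underline\lambda\in\mathcal P_{n-1}$, write $\underline\mu_i=\sum_{j\ne i}\underline\lambda_j$, and let $\varepsilon>0$ with $\min_i\underline\mu_i\ge\varepsilon$. Suppose $\min_j\mu_j\le\frac{\varepsilon}{2n}$. Then $$\sum_{i=1}^n\frac1{\mu_i}\ge\frac{2n}{\varepsilon},\qquad \sum_{i=1}^nf_i(\lambda)(\underline\lambda_i-\lambda_i)\ge\frac{\varepsilon}{2}\sum_{i=1}^n\frac1{\mu_i}=\frac{\varepsilon}{2(n-1)}\sum_{i=1}^nf_i(\lambda),$$ where $f_i=\partial f/\partial\lambda_i$. *)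

theory Defs
  imports "HOL-Analysis.Analysis"
begin

text \<open>Vectors in R^n are modelled as real^'n with a finite index type 'n, n = CARD('n).\<close>

definition mu :: "real^'n \<Rightarrow> 'n \<Rightarrow> real" where
  "mu lam i = (\<Sum>j\<in>UNIV - {i}. lam $ j)"

definition P_n1 :: "real^'n \<Rightarrow> real" where
  "P_n1 lam = (\<Prod>i\<in>UNIV. mu lam i)"

definition P_cone :: "(real^'n) set" where
  "P_cone = {lam. \<forall>i. mu lam i > 0}"

definition logP :: "real^'n \<Rightarrow> real" where
  "logP lam = ln (P_n1 lam)"

definition f_i :: "'n \<Rightarrow> real^'n \<Rightarrow> real" where
  "f_i i lam = deriv (\<lambda>t. logP (lam + t *\<^sub>R axis i 1)) 0"

end

theory Submission
  imports Defs
begin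

text \<open>Write \<open>\<lambda>'\<close>, \<open>\<mu>'\<close> for the underlined \<open>\<lambda>\<close>, \<open>\<mu>\<close>. Since \<open>f = \<Sum>\<^sub>k log \<mu>\<^sub>k\<close> and
  \<open>\<partial>\<mu>\<^sub>k/\<partial>\<lambda>\<^sub>i = [k \<noteq> i]\<close>, we get \<open>f\<^sub>i = \<Sum>\<^bsub>k \<noteq> i\<^esub> 1/\<mu>\<^sub>k\<close>. Hence \<open>\<Sum>\<^sub>i f\<^sub>i = (n-1) \<Sum>\<^sub>k 1/\<mu>\<^sub>k\<close>, and
  exchanging the order of summation gives \<open>\<Sum>\<^sub>i f\<^sub>i (\<lambda>'\<^sub>i - \<lambda>\<^sub>i) = \<Sum>\<^sub>k \<mu>'\<^sub>k/\<mu>\<^sub>k - n \<ge> \<epsilon> \<Sum>\<^sub>k 1/\<mu>\<^sub>k - n\<close>.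
  A single \<open>\<mu>\<^sub>j \<le> \<epsilon>/2n\<close> already forces \<open>\<Sum>\<^sub>k 1/\<mu>\<^sub>k \<ge> 2n/\<epsilon>\<close>, i.e. \<open>n \<le> (\<epsilon>/2) \<Sum>\<^sub>k 1/\<mu>\<^sub>k\<close>,
  which absorbs the \<open>-n\<close>.\<close>

lemma DERIV_ln_prod:
  fixes g :: "'a \<Rightarrow> real \<Rightarrow> real"
  assumes pos: "\<And>k. k \<in> A \<Longrightarrow> g k z > 0"
    and deriv: "\<And>k. k \<in> A \<Longrightarrow> (g k has_real_derivative g' k) (at z)"
  shows "((\<lambda>t. ln (\<Prod>k\<in>A. g k t)) has_real_derivative (\<Sum>k\<in>A. g' k / g k z)) (at z)"
proof -
  have "((\<lambda>t. \<Prod>k\<in>A. g k t) has_real_derivative (\<Prod>k\<in>A. g k z) * (\<Sum>k\<in>A. g' k / g k z)) (at z)"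
    using pos deriv by (intro has_field_derivative_prod') (auto dest!: pos)
  moreover have "(\<Prod>k\<in>A. g k z) > 0"
    using pos by (rule prod_pos)
  ultimately show ?thesis
    by (auto intro!: derivative_eq_intros)
qed

lemma mu_eq_sum_minus: "mu x k = (\<Sum>j\<in>UNIV. x $ j) - x $ k"
  unfolding mu_def by (simp add: sum_diff1)

lemma mu_add_scaleR_axis:
  "mu (lam + t *\<^sub>R axis i 1) k = mu lam k + (if k = i then 0 else t)"
proof -
  have "(lam + t *\<^sub>R axis i 1) $ j = lam $ j + (if j = i then t else 0)" for j
    by (simp add: axis_def)
  then show ?thesis
    unfolding mu_eq_sum_minus by (simp add: sum.distrib)
qed

lemma f_i_eq:
  fixes lam :: "real^'n"
  assumes "lam \<in> P_cone"
  shows "f_i i lam = (\<Sum>k\<in>UNIV. 1 / mu lam k) - 1 / mu lam i"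
proof -
  define c where "c k = (if k = i then 0 else 1 :: real)" for k
  have "logP (lam + t *\<^sub>R axis i 1) = ln (\<Prod>k\<in>UNIV. mu lam k + c k * t)" for t
    unfolding logP_def P_n1_def mu_add_scaleR_axis c_def by (intro arg_cong[where f = ln] prod.cong) auto
  moreover have "((\<lambda>t. ln (\<Prod>k\<in>UNIV. mu lam k + c k * t)) has_real_derivative
      (\<Sum>k\<in>UNIV. c k / (mu lam k + c k * 0))) (at 0)"
    using assms unfolding P_cone_def by (intro DERIV_ln_prod) (auto intro!: derivative_eq_intros)
  ultimately have "f_i i lam = (\<Sum>k\<in>UNIV. c k / mu lam k)"
    unfolding f_i_def by (simp add: DERIV_imp_deriv)
  also have "\<dots> = (\<Sum>k\<in>UNIV. 1 / mu lam k - (if k = i then 1 / mu lam k else 0))"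
    by (intro sum.cong) (auto simp: c_def)
  finally show ?thesis
    by (simp add: sum_subtractf)
qed

lemma sum_f_i_eq:
  fixes lam :: "real^'n"
  assumes "lam \<in> P_cone"
  shows "(\<Sum>i\<in>UNIV. f_i i lam) = (real CARD('n) - 1) * (\<Sum>k\<in>UNIV. 1 / mu lam k)"
  using assms by (simp add: f_i_eq sum_subtractf algebra_simps)

lemma sum_f_i_mult_diff_eq:
  fixes lam lam' :: "real^'n"
  assumes "lam \<in> P_cone"
  shows "(\<Sum>i\<in>UNIV. f_i i lam * (lam' $ i - lam $ i))
       = (\<Sum>k\<in>UNIV. mu lam' k / mu lam k) - real CARD('n)"
proof -
  define S where "S = (\<Sum>k\<in>UNIV. 1 / mu lam k)"
  define d where "d j = lam' $ j - lam $ j" for j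
  define D where "D = (\<Sum>j\<in>UNIV. d j)"
  have pos: "mu lam k > 0" for k
    using assms by (simp add: P_cone_def)
  have "(\<Sum>i\<in>UNIV. f_i i lam * (lam' $ i - lam $ i)) = (\<Sum>i\<in>UNIV. (S - 1 / mu lam i) * d i)"
    using assms unfolding S_def d_def by (simp add: f_i_eq)
  also have "\<dots> = S * D - (\<Sum>i\<in>UNIV. d i / mu lam i)"
    unfolding D_def by (simp add: algebra_simps sum_subtractf sum_distrib_left)
  also have "\<dots> = (\<Sum>k\<in>UNIV. (D - d k) / mu lam k)"
    unfolding S_def by (simp add: diff_divide_distrib sum_subtractf sum_distrib_right)
  also have "\<dots> = (\<Sum>k\<in>UNIV. mu lam' k / mu lam k - 1)"
  proof (intro sum.cong refl)
    fix k
    have "D - d k = mu lam' k - mu lam k"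
      unfolding mu_eq_sum_minus D_def d_def by (simp add: sum_subtractf)
    then show "(D - d k) / mu lam k = mu lam' k / mu lam k - 1"
      using pos[of k] by (simp add: field_simps)
  qed
  finally show ?thesis
    by (simp add: sum_subtractf)
qed

lemma inverse_Min_le_sum_inverse:
  fixes x :: "'a::finite \<Rightarrow> real"
  assumes "\<And>k. x k > 0"
  shows "1 / Min (range x) \<le> (\<Sum>k\<in>UNIV. 1 / x k)"
proof -
  have "Min (range x) \<in> range x"
    by (intro Min_in) auto
  then obtain k where "Min (range x) = x k"
    by blast
  then have "1 / Min (range x) = 1 / x k"
    by simp
  also have "1 / x k \<le> (\<Sum>k\<in>UNIV. 1 / x k)"
    using assms by (intro member_le_sum) (auto intro: less_imp_le)
  finally show ?thesis .
qed

lemma Min_le_mult_sum_inverse: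
  fixes x y :: "'a::finite \<Rightarrow> real"
  assumes "\<And>k. x k > 0"
  shows "Min (range y) * (\<Sum>k\<in>UNIV. 1 / x k) \<le> (\<Sum>k\<in>UNIV. y k / x k)"
  unfolding sum_distrib_left
  using assms by (intro sum_mono) (simp add: divide_right_mono less_imp_le)

theorem lemma3p1:
  fixes lam lamu :: "real^'n" and eps :: real
  assumes "CARD('n) \<ge> 2"
    and "lam \<in> P_cone" and "lamu \<in> P_cone"
    and "eps > 0"
    and "Min (range (mu lamu)) \<ge> eps"
    and "Min (range (mu lam)) \<le> eps / (2 * real CARD('n))"
  shows "(\<Sum>i\<in>UNIV. 1 / mu lam i) \<ge> 2 * real CARD('n) / eps
       \<and> (\<Sum>i\<in>UNIV. f_i i lam * (lamu $ i - lam $ i)) \<ge> eps / 2 * (\<Sum>i\<in>UNIV. 1 / mu lam i)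
       \<and> eps / 2 * (\<Sum>i\<in>UNIV. 1 / mu lam i) = eps / (2 * (real CARD('n) - 1)) * (\<Sum>i\<in>UNIV. f_i i lam)"
proof -
  define S where "S = (\<Sum>i\<in>UNIV. 1 / mu lam i)"
  define n where "n = real CARD('n)"
  have pos: "mu lam k > 0" for k
    using assms(2) by (simp add: P_cone_def)
  have "Min (range (mu lam)) > 0"
    using Min_in[of "range (mu lam)"] pos by auto
  then have "2 * n / eps \<le> 1 / Min (range (mu lam))"
    using assms(4,6) unfolding n_def by (simp add: field_simps)
  also have "\<dots> \<le> S"
    unfolding S_def using pos by (rule inverse_Min_le_sum_inverse)
  finally have small_mu: "2 * n / eps \<le> S" .
  have "eps * S \<le> Min (range (mu lamu)) * S"
    using assms(5) pos unfolding S_def by (simp add: mult_right_mono sum_nonneg less_imp_le)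
  also have "\<dots> \<le> (\<Sum>k\<in>UNIV. mu lamu k / mu lam k)"
    unfolding S_def using pos by (rule Min_le_mult_sum_inverse)
  finally have "eps * S \<le> (\<Sum>k\<in>UNIV. mu lamu k / mu lam k)" .
  with small_mu have "(\<Sum>i\<in>UNIV. f_i i lam * (lamu $ i - lam $ i)) \<ge> eps / 2 * S"
    using assms(4) unfolding sum_f_i_mult_diff_eq[OF assms(2)] n_def by (simp add: field_simps)
  moreover have "eps / 2 * S = eps / (2 * (n - 1)) * (\<Sum>i\<in>UNIV. f_i i lam)"
    using assms(1) unfolding sum_f_i_eq[OF assms(2)] S_def n_def by (simp add: field_simps)
  ultimately show ?thesis
    using small_mu unfolding S_def n_def by blast
qed

end
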